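(* Let $K$ be an oriented virtual knot diagram with a positive classical crossing $l$, and let $K'$ be the diagram obtained from $K$ by switching $l$ to a negative crossing. Then $\gamma(K)-\gamma(K')=\pm 2\,t^{\bar L(K_l)}$ and $\bar\gamma(K)-\bar\gamma(K')=0$.
   Context: For an oriented virtual knot diagram $K$ and a classical crossing $c$ with sign $sgn(c)\in\{\pm1\}$, let $K_c$ be the two-component oriented virtual link diagram obtained by smoothing $c$ in the orientation-respecting way. Let $L(K_c)$ be the sum of the signs of all classical crossings of $K_c$ at which the two strands belong to different components, and $\bar L(K_c)=L(K_c)\bmod 2\in\{0,1\}$. Define $\gamma(K)=\sum_{c} t^{\bar L(K_c)}\,sgn(c)$, summing over all classical crossings, an element of the free $\mathbb{Z}$-module on $\{1,t\}$, and $\bar\gamma(K)$ to be $\gamma(K)$ with coefficients reduced modulo $2$. *)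

theory Defs
  imports "HOL-Computational_Algebra.Polynomial" "HOL-Library.Z2"
begin

text \<open>An oriented virtual knot diagram is encoded (up to virtual moves, which do not
affect any of the quantities involved) by its Gauss diagram: the Gauss word read along
the oriented knot, whose letters are pairs (crossing, over?) -- every crossing occurs
exactly twice, once as overpass (True) and once as underpass (False) -- together with a
sign function on the classical crossings.\<close>

type_synonym 'c gauss_diagram = "('c \<times> bool) list \<times> ('c \<Rightarrow> int)"

definition crossings :: "'c gauss_diagram \<Rightarrow> 'c set" where
  "crossings D = fst ` set (fst D)"

definition virtual_knot_diagram :: "'c gauss_diagram \<Rightarrow> bool" where
  "virtual_knot_diagram D \<longleftrightarrow> distinct (fst D) \<and>
     set (fst D) = crossings D \<times> UNIV \<and>
     (\<forall>c\<in>crossings D. snd D c = 1 \<or> snd D c = -1)"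

definition sgn_cr :: "'c gauss_diagram \<Rightarrow> 'c \<Rightarrow> int" where
  "sgn_cr D c = snd D c"

definition pos :: "'c gauss_diagram \<Rightarrow> 'c \<times> bool \<Rightarrow> nat" where
  "pos D x = (THE i. i < length (fst D) \<and> fst D ! i = x)"

text \<open>Smoothing c in the orientation-respecting way splits the circle into the arc strictly
between the two occurrences of c (one component) and the complementary arc (the other
component).\<close>
definition on_first_arc :: "'c gauss_diagram \<Rightarrow> 'c \<Rightarrow> 'c \<times> bool \<Rightarrow> bool" where
  "on_first_arc D c x \<longleftrightarrow>
     min (pos D (c,True)) (pos D (c,False)) < pos D x \<and>
     pos D x < max (pos D (c,True)) (pos D (c,False))"

definition inter_component :: "'c gauss_diagram \<Rightarrow> 'c \<Rightarrow> 'c \<Rightarrow> bool" where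
  "inter_component D c d \<longleftrightarrow> d \<noteq> c \<and>
     (on_first_arc D c (d,True) \<noteq> on_first_arc D c (d,False))"

definition L_smooth :: "'c gauss_diagram \<Rightarrow> 'c \<Rightarrow> int" where
  "L_smooth D c = (\<Sum>d\<in>{d\<in>crossings D. inter_component D c d}. sgn_cr D d)"

definition Lbar_smooth :: "'c gauss_diagram \<Rightarrow> 'c \<Rightarrow> nat" where
  "Lbar_smooth D c = nat (L_smooth D c mod 2)"

text \<open>The free Z-module on {1,t} is realised inside Z[t].\<close>
definition gamma :: "'c gauss_diagram \<Rightarrow> int poly" where
  "gamma D = (\<Sum>c\<in>crossings D. smult (sgn_cr D c) (monom 1 (Lbar_smooth D c)))"

definition gamma_bar :: "'c gauss_diagram \<Rightarrow> bit poly" where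
  "gamma_bar D = map_poly of_int (gamma D)"

definition crossing_switch :: "'c gauss_diagram \<Rightarrow> 'c \<Rightarrow> 'c gauss_diagram" where
  "crossing_switch D l =
     (map (\<lambda>(d,b). if d = l then (d, \<not> b) else (d, b)) (fst D),
      (snd D)(l := - snd D l))"

end

theory Submission
  imports Defs
begin

text \<open>Switching l only flips the over/under labels of the two occurrences of l; the Gauss word
keeps its positions, so the smoothing of any crossing c splits the circle into the same two arcs
and the set of inter-component crossings of K_c is unchanged. Only the sign of l changes, from
s to -s, so L(K_c) changes by 0 or 2s and its parity is preserved. Hence gamma changes in the
summand of l alone, by 2s t^{bar L(K_l)}, which vanishes modulo 2.\<close>

definition switch_occurrence :: "'c \<Rightarrow> 'c \<times> bool \<Rightarrow> 'c \<times> bool" where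
  "switch_occurrence l = (\<lambda>(d,b). if d = l then (d, \<not> b) else (d, b))"

lemma switch_occurrence_involutive [simp]: "switch_occurrence l (switch_occurrence l x) = x"
  by (cases x) (auto simp: switch_occurrence_def)

lemma fst_switch_occurrence [simp]: "fst (switch_occurrence l x) = fst x"
  by (cases x) (auto simp: switch_occurrence_def)

lemma word_crossing_switch: "fst (crossing_switch D l) = map (switch_occurrence l) (fst D)"
  by (simp add: crossing_switch_def switch_occurrence_def)

lemma pos_crossing_switch: "pos (crossing_switch D l) x = pos D (switch_occurrence l x)"
proof -
  have "(i < length (fst (crossing_switch D l)) \<and> fst (crossing_switch D l) ! i = x)
      = (i < length (fst D) \<and> fst D ! i = switch_occurrence l x)" for i
    unfolding word_crossing_switch by (auto simp: nth_map)
  then show ?thesis unfolding pos_def by simp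
qed

lemma crossings_crossing_switch [simp]: "crossings (crossing_switch D l) = crossings D"
  unfolding crossings_def word_crossing_switch by (simp add: image_image)

lemma finite_crossings [simp]: "finite (crossings D)"
  unfolding crossings_def by simp

lemma sgn_cr_crossing_switch:
  "sgn_cr (crossing_switch D l) d = (if d = l then - sgn_cr D d else sgn_cr D d)"
  by (simp add: crossing_switch_def sgn_cr_def)

lemma on_first_arc_crossing_switch:
  "on_first_arc (crossing_switch D l) c x = on_first_arc D c (switch_occurrence l x)"
  unfolding on_first_arc_def pos_crossing_switch
  by (cases "c = l") (auto simp: switch_occurrence_def min.commute max.commute)

lemma inter_component_crossing_switch [simp]:
  "inter_component (crossing_switch D l) c d = inter_component D c d"
  unfolding inter_component_def on_first_arc_crossing_switch
  by (cases "d = l") (auto simp: switch_occurrence_def)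

lemma L_smooth_crossing_switch:
  "L_smooth (crossing_switch D l) c =
     L_smooth D c - (if l \<in> crossings D \<and> inter_component D c l then 2 * sgn_cr D l else 0)"
proof -
  let ?S = "{d\<in>crossings D. inter_component D c d}"
  have "L_smooth (crossing_switch D l) c = (\<Sum>d\<in>?S. sgn_cr (crossing_switch D l) d)"
    unfolding L_smooth_def by simp
  also have "\<dots> = (\<Sum>d\<in>?S. sgn_cr D d - (if d = l then 2 * sgn_cr D l else 0))"
    by (rule sum.cong) (auto simp: sgn_cr_crossing_switch)
  also have "\<dots> = L_smooth D c - (\<Sum>d\<in>?S. if d = l then 2 * sgn_cr D l else 0)"
    by (simp add: sum_subtractf L_smooth_def)
  finally show ?thesis by (simp add: sum.delta)
qed

lemma Lbar_smooth_crossing_switch [simp]: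
  "Lbar_smooth (crossing_switch D l) c = Lbar_smooth D c"
proof -
  have "(x - 2 * s) mod 2 = x mod 2" for x s :: int
    by (metis mod_mult_self1 mult.commute diff_conv_add_uminus mult_minus_left)
  then show ?thesis
    unfolding Lbar_smooth_def L_smooth_crossing_switch by auto
qed

lemma gamma_crossing_switch_diff:
  assumes "l \<in> crossings D"
  shows "gamma D - gamma (crossing_switch D l) = smult (2 * sgn_cr D l) (monom 1 (Lbar_smooth D l))"
proof -
  have "gamma D - gamma (crossing_switch D l) =
      (\<Sum>c\<in>crossings D. smult (sgn_cr D c - sgn_cr (crossing_switch D l) c) (monom 1 (Lbar_smooth D c)))"
    unfolding gamma_def by (simp add: sum_subtractf smult_diff_left)
  also have "\<dots> = (\<Sum>c\<in>crossings D. if c = l then smult (2 * sgn_cr D l) (monom 1 (Lbar_smooth D l)) else 0)"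
    by (rule sum.cong) (auto simp: sgn_cr_crossing_switch)
  finally show ?thesis using assms by (simp add: sum.delta)
qed

lemma map_poly_of_int_bit_smult_even: "map_poly (of_int :: int \<Rightarrow> bit) (smult (2 * k) p) = 0"
  by (simp add: poly_eq_iff coeff_map_poly)

lemma gamma_bar_diff:
  "gamma_bar D - gamma_bar E = map_poly of_int (gamma D - gamma E)"
  unfolding gamma_bar_def by (simp add: poly_eq_iff coeff_map_poly)

theorem mainTheorem4:
  fixes K :: "'c gauss_diagram" and l :: 'c
  assumes "virtual_knot_diagram K"
    and "l \<in> crossings K"
    and "sgn_cr K l = 1"
  shows "(gamma K - gamma (crossing_switch K l) = smult 2 (monom 1 (Lbar_smooth K l))
          \<or> gamma K - gamma (crossing_switch K l) = smult (-2) (monom 1 (Lbar_smooth K l)))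
         \<and> gamma_bar K - gamma_bar (crossing_switch K l) = 0"
proof -
  have diff: "gamma K - gamma (crossing_switch K l) = smult (2 * sgn_cr K l) (monom 1 (Lbar_smooth K l))"
    using assms(2) by (rule gamma_crossing_switch_diff)
  then have "gamma_bar K - gamma_bar (crossing_switch K l) = 0"
    by (simp only: gamma_bar_diff map_poly_of_int_bit_smult_even)
  with diff show ?thesis using assms(3) by simp
qed

end
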